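(* Let $G$ be an undirected graph, $D\ge1$ an integer, and let $G^D$ denote the graph on $V(G)$ in which distinct vertices $u,v$ are adjacent iff $G$ contains a path of length at most $D$ between them. Let $v_1,\ldots,v_k$ be an independent set in $G^D$. Let $(s,t)$ be a pair of vertices with $(s,t)\notin E(G)$, let $G'=(V(G),E(G)\cup\{(s,t)\})$, and let $H'$ be the subgraph of $(G')^D$ induced by $\{v_1,\ldots,v_k\}$. Then there exists $i\in\{1,\ldots,k\}$ such that every edge of $H'$ (if any) is incident to $v_i$. In particular, if $G^D$ has an independent set of size $k$, then $(G')^D$ has an independent set of size $k-1$. *)

theory Defs
  imports Main
begin

definition ugraph :: "'a set \<Rightarrow> 'a set set \<Rightarrow> bool" where
  "ugraph V E \<longleftrightarrow> (\<forall>e\<in>E. \<exists>u v. e = {u, v} \<and> u \<noteq> v \<and> u \<in> V \<and> v \<in> V)"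

text \<open>A path is a nonempty list of distinct vertices, consecutive ones adjacent;
  its length is the number of edges, i.e. length p - 1.\<close>
definition is_path :: "'a set \<Rightarrow> 'a set set \<Rightarrow> 'a list \<Rightarrow> bool" where
  "is_path V E p \<longleftrightarrow> p \<noteq> [] \<and> distinct p \<and> set p \<subseteq> V \<and>
     (\<forall>i. Suc i < length p \<longrightarrow> {p ! i, p ! Suc i} \<in> E)"

definition power_edges :: "'a set \<Rightarrow> 'a set set \<Rightarrow> nat \<Rightarrow> 'a set set" where
  "power_edges V E D = {{u, v} | u v. u \<in> V \<and> v \<in> V \<and> u \<noteq> v \<and>
     (\<exists>p. is_path V E p \<and> hd p = u \<and> last p = v \<and> length p - 1 \<le> D)}"

definition independent :: "'a set \<Rightarrow> 'a set set \<Rightarrow> 'a set \<Rightarrow> bool" where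
  "independent V E I \<longleftrightarrow> I \<subseteq> V \<and> (\<forall>u\<in>I. \<forall>v\<in>I. u \<noteq> v \<longrightarrow> {u, v} \<notin> E)"

end

theory Submission
  imports Defs
begin

(*
  Call a pair of vertices "D-close" in G if they are joined by a walk
  with at most D edges; in G^D two distinct vertices are adjacent iff they are D-close
  (a shortest walk is a path).  A short walk in G' = G + st either avoids st, or
  splits as  a ~m~> x -- y ~k~> b  with {x,y} = {s,t} and m + k + 1 <= D.
  So for an independent set I of G^D, every edge of H' can be oriented as u -> v
  with  u ~m~> s  and  t ~k~> v, m + k + 1 <= D.  For two such oriented edges
  u1 -> v1 and u2 -> v2, either m1 + m2 <= D or k1 + k2 <= D, hence the tails or the
  heads are D-close in G and therefore equal (I is independent).  Given one edge
  a -> b, any edge missing a has head b and any edge missing b has tail a; two such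
  edges would share neither tail nor head, so a or b covers all edges of H'.
*)

inductive walk_within :: "'a set \<Rightarrow> 'a set set \<Rightarrow> nat \<Rightarrow> 'a \<Rightarrow> 'a \<Rightarrow> bool"
  for V :: "'a set" and E :: "'a set set" where
  here: "a \<in> V \<Longrightarrow> walk_within V E n a a"
| step: "{a, b} \<in> E \<Longrightarrow> a \<in> V \<Longrightarrow> walk_within V E n b c \<Longrightarrow> walk_within V E (Suc n) a c"

lemma walk_within_mono:
  "walk_within V E n a b \<Longrightarrow> n \<le> k \<Longrightarrow> walk_within V E k a b"
proof (induction arbitrary: k rule: walk_within.induct)
  case (step a b n c)
  then obtain k' where "k = Suc k'" "n \<le> k'" by (cases k) auto
  then show ?case using step by (auto intro: walk_within.step)
qed (rule walk_within.here)

lemma walk_within_snoc: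
  "walk_within V E n a b \<Longrightarrow> {b, c} \<in> E \<Longrightarrow> c \<in> V \<Longrightarrow> walk_within V E (Suc n) a c"
  by (induction rule: walk_within.induct) (auto intro: walk_within.intros)

lemma walk_within_sym: "walk_within V E n a b \<Longrightarrow> walk_within V E n b a"
proof (induction rule: walk_within.induct)
  case (step a b n c)
  then show ?case by (intro walk_within_snoc) (auto simp: insert_commute)
qed (rule walk_within.here)

lemma walk_within_trans:
  "walk_within V E m a b \<Longrightarrow> walk_within V E k b c \<Longrightarrow> walk_within V E (m + k) a c"
proof (induction rule: walk_within.induct)
  case (here a m)
  show ?case by (rule walk_within_mono[OF here.prems]) simp
next
  case (step a b m c)
  then show ?case by (auto intro: walk_within.step)
qed

lemma is_path_single: "is_path V E [a] \<longleftrightarrow> a \<in> V"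
  by (simp add: is_path_def)

lemma is_path_Cons:
  "is_path V E (a # b # p) \<longleftrightarrow> a \<in> V \<and> a \<notin> set (b # p) \<and> {a, b} \<in> E \<and> is_path V E (b # p)"
  unfolding is_path_def
  by (auto simp: nth_Cons split: nat.splits)

lemma is_path_suffix: "is_path V E (xs @ ys) \<Longrightarrow> ys \<noteq> [] \<Longrightarrow> is_path V E ys"
proof (induction xs)
  case (Cons x xs)
  then show ?case by (cases "xs @ ys") (auto simp: is_path_Cons)
qed simp

lemma path_walk_within:
  "is_path V E p \<Longrightarrow> walk_within V E (length p - 1) (hd p) (last p)"
proof (induction p rule: induct_list012)
  case (3 a b p)
  then show ?case by (auto simp: is_path_Cons intro: walk_within.step)
qed (auto simp: is_path_def intro: walk_within.here)

text \<open>Conversely a shortest walk is a path: cut out a cycle through the first vertex.\<close>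
lemma walk_within_path:
  "walk_within V E n a b \<Longrightarrow> \<exists>p. is_path V E p \<and> hd p = a \<and> last p = b \<and> length p - 1 \<le> n"
proof (induction rule: walk_within.induct)
  case (here a n)
  then show ?case by (intro exI[of _ "[a]"]) (simp add: is_path_single)
next
  case (step a b n c)
  then obtain p where p: "is_path V E p" "hd p = b" "last p = c" "length p - 1 \<le> n" by blast
  then have "p \<noteq> []" by (simp add: is_path_def)
  then obtain p' where p': "p = b # p'" using p(2) by (cases p) auto
  show ?case
  proof (cases "a \<in> set p")
    case True
    then obtain xs ys where split: "p = xs @ a # ys" by (meson split_list)
    then have "is_path V E (a # ys)" using p(1) is_path_suffix by blast
    moreover have "last (a # ys) = c" using p(3) split by simp
    moreover have "length (a # ys) \<le> length p" using split by simp
    ultimately show ?thesis using p(4) by (intro exI[of _ "a # ys"]) auto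
  next
    case False
    then have "is_path V E (a # p)" using step.hyps p(1) by (simp add: p' is_path_Cons)
    then show ?thesis using p p' by (intro exI[of _ "a # p"]) auto
  qed
qed

lemma independent_walk_within_eq:
  assumes indep: "independent V (power_edges V E D) I" and "a \<in> I" "b \<in> I"
    and walk: "walk_within V E n a b" and "n \<le> D"
  shows "a = b"
proof (rule ccontr)
  assume "a \<noteq> b"
  obtain p where "is_path V E p" "hd p = a" "last p = b" "length p - 1 \<le> D"
    using walk_within_path[OF walk] \<open>n \<le> D\<close> by fastforce
  moreover have "a \<in> V" "b \<in> V" using indep \<open>a \<in> I\<close> \<open>b \<in> I\<close> by (auto simp: independent_def)
  ultimately have "{a, b} \<in> power_edges V E D"
    using \<open>a \<noteq> b\<close> unfolding power_edges_def by blast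
  then show False using indep \<open>a \<in> I\<close> \<open>b \<in> I\<close> \<open>a \<noteq> b\<close> by (auto simp: independent_def)
qed

lemma walk_within_insert_edge:
  "walk_within V (insert {s, t} E) n a b \<Longrightarrow>
     walk_within V E n a b \<or>
     (\<exists>x y m k. {x, y} = {s, t} \<and> m + k + 1 \<le> n \<and> walk_within V E m a x \<and> walk_within V E k y b)"
proof (induction rule: walk_within.induct)
  case (here a n)
  then show ?case by (simp add: walk_within.here)
next
  case (step a b n c)
  show ?case
  proof (cases "{a, b} \<in> E")
    case True
    from step.IH show ?thesis
    proof (elim disjE exE conjE)
      assume "walk_within V E n b c"
      then show ?thesis using True step.hyps by (auto intro: walk_within.step)
    next
      fix x y m k
      assume "{x, y} = {s, t}" "m + k + 1 \<le> n" "walk_within V E m b x" "walk_within V E k y c"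
      then show ?thesis using True step.hyps
        by (intro disjI2 exI[of _ x] exI[of _ y] exI[of _ "Suc m"] exI[of _ k])
           (auto intro: walk_within.step)
    qed
  next
    case False
    then have new: "{a, b} = {s, t}" using step.hyps(1) by blast
    have start: "walk_within V E 0 a a" using step.hyps(2) by (rule walk_within.here)
    from step.IH show ?thesis
    proof (elim disjE exE conjE)
      assume "walk_within V E n b c"
      then show ?thesis using new start
        by (intro disjI2 exI[of _ a] exI[of _ b] exI[of _ 0] exI[of _ n]) auto
    next
      fix x y m k
      assume xy: "{x, y} = {s, t}" and len: "m + k + 1 \<le> n" and rest: "walk_within V E k y c"
      have "y = a \<or> y = b" using xy new by blast
      then show ?thesis
      proof
        assume "y = a"
        then show ?thesis using rest len by (auto intro: walk_within_mono)
      next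
        assume "y = b"
        then show ?thesis using rest len new start
          by (intro disjI2 exI[of _ a] exI[of _ b] exI[of _ 0] exI[of _ k]) auto
      qed
    qed
  qed
qed

definition through_new_edge :: "'a set \<Rightarrow> 'a set set \<Rightarrow> nat \<Rightarrow> 'a \<Rightarrow> 'a \<Rightarrow> 'a \<Rightarrow> 'a \<Rightarrow> bool" where
  "through_new_edge V E D s t u v \<longleftrightarrow>
     (\<exists>m k. m + k + 1 \<le> D \<and> walk_within V E m u s \<and> walk_within V E k t v)"

lemma edge_through_new_edge:
  assumes indep: "independent V (power_edges V E D) I"
    and e: "e \<in> power_edges V (insert {s, t} E) D" and "e \<subseteq> I"
  obtains u v where "e = {u, v}" "u \<in> I" "v \<in> I" "u \<noteq> v" "through_new_edge V E D s t u v"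
proof -
  obtain u v p where uv: "e = {u, v}" "u \<noteq> v"
    and p: "is_path V (insert {s, t} E) p" "hd p = u" "last p = v" "length p - 1 \<le> D"
    using e unfolding power_edges_def by blast
  have I: "u \<in> I" "v \<in> I" using \<open>e \<subseteq> I\<close> uv by auto
  have "walk_within V (insert {s, t} E) D u v"
    using path_walk_within[OF p(1)] p by (auto intro: walk_within_mono)
  from walk_within_insert_edge[OF this] show ?thesis
  proof (elim disjE exE conjE)
    assume "walk_within V E D u v"
    then show ?thesis using independent_walk_within_eq[OF indep I] uv by blast
  next
    fix x y m k
    assume xy: "{x, y} = {s, t}" and len: "m + k + 1 \<le> D"
      and walks: "walk_within V E m u x" "walk_within V E k y v"
    show ?thesis
    proof (cases "x = s")
      case True
      then have "y = t" using xy by (metis doubleton_eq_iff)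
      then have "through_new_edge V E D s t u v"
        using True len walks unfolding through_new_edge_def by blast
      then show ?thesis using that uv I by blast
    next
      case False
      then have "x = t" "y = s" using xy by (auto simp: doubleton_eq_iff)
      then have "through_new_edge V E D s t v u"
        using len walks walk_within_sym unfolding through_new_edge_def
        by (metis add.commute)
      then show ?thesis using that[of v u] uv I by (auto simp: insert_commute)
    qed
  qed
qed

lemma through_new_edge_share:
  assumes indep: "independent V (power_edges V E D) I"
    and "u1 \<in> I" "v1 \<in> I" "u2 \<in> I" "v2 \<in> I"
    and e1: "through_new_edge V E D s t u1 v1" and e2: "through_new_edge V E D s t u2 v2"
  shows "u1 = u2 \<or> v1 = v2"
proof -
  obtain m1 k1 where 1: "m1 + k1 + 1 \<le> D" "walk_within V E m1 u1 s" "walk_within V E k1 t v1"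
    using e1 unfolding through_new_edge_def by blast
  obtain m2 k2 where 2: "m2 + k2 + 1 \<le> D" "walk_within V E m2 u2 s" "walk_within V E k2 t v2"
    using e2 unfolding through_new_edge_def by blast
  have tails: "walk_within V E (m1 + m2) u1 u2"
    using walk_within_trans[OF 1(2) walk_within_sym[OF 2(2)]] .
  have heads: "walk_within V E (k1 + k2) v1 v2"
    using walk_within_trans[OF walk_within_sym[OF 1(3)] 2(3)] .
  have "m1 + m2 \<le> D \<or> k1 + k2 \<le> D" using 1(1) 2(1) by linarith
  then show ?thesis
    using independent_walk_within_eq[OF indep] tails heads assms(2-5) by blast
qed

lemma power_edges_insert_star:
  assumes indep: "independent V (power_edges V E D) I" and "I \<noteq> {}"
  shows "\<exists>c\<in>I. \<forall>e\<in>{e \<in> power_edges V (insert {s, t} E) D. e \<subseteq> I}. c \<in> e"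
proof (cases "\<exists>e \<in> power_edges V (insert {s, t} E) D. e \<subseteq> I")
  case False
  then show ?thesis using \<open>I \<noteq> {}\<close> by auto
next
  case True
  let ?H = "{e \<in> power_edges V (insert {s, t} E) D. e \<subseteq> I}"
  note orient = edge_through_new_edge[OF indep]
  note share = through_new_edge_share[OF indep]
  obtain a b where ab: "a \<in> I" "b \<in> I" "through_new_edge V E D s t a b"
    using True orient by metis
  have "(\<forall>e\<in>?H. a \<in> e) \<or> (\<forall>e\<in>?H. b \<in> e)"
  proof (rule ccontr)
    assume "\<not> ?thesis"
    then obtain e1 e2 where "e1 \<in> ?H" "a \<notin> e1" "e2 \<in> ?H" "b \<notin> e2" by blast
    then obtain u1 v1 u2 v2 where
      1: "e1 = {u1, v1}" "u1 \<in> I" "v1 \<in> I" "through_new_edge V E D s t u1 v1" and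
      2: "e2 = {u2, v2}" "u2 \<in> I" "v2 \<in> I" "through_new_edge V E D s t u2 v2"
      using orient by (metis (no_types, lifting) mem_Collect_eq)
    have "v1 = b" using share[OF ab(1,2) 1(2,3) ab(3) 1(4)] \<open>a \<notin> e1\<close> 1(1) by auto
    moreover have "u2 = a" using share[OF ab(1,2) 2(2,3) ab(3) 2(4)] \<open>b \<notin> e2\<close> 2(1) by auto
    ultimately show False
      using share[OF 1(2,3) 2(2,3) 1(4) 2(4)] \<open>a \<notin> e1\<close> \<open>b \<notin> e2\<close> 1(1) 2(1) by auto
  qed
  then show ?thesis using ab(1,2) by blast
qed

lemma independent_remove_cover:
  assumes "J \<subseteq> V" and "\<forall>e\<in>{e \<in> F. e \<subseteq> J}. c \<in> e"
  shows "independent V F (J - {c})"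
  using assms unfolding independent_def by auto

theorem mainTheorem11:
  fixes V :: "'a set" and E :: "'a set set" and D :: nat and I :: "'a set" and s t :: 'a
  assumes "ugraph V E"
    and "D \<ge> 1"
    and "finite I" and "I \<noteq> {}"
    and "independent V (power_edges V E D) I"
    and "s \<in> V" and "t \<in> V" and "s \<noteq> t" and "{s, t} \<notin> E"
  shows "(\<exists>v\<in>I. \<forall>e\<in>{e \<in> power_edges V (insert {s, t} E) D. e \<subseteq> I}. v \<in> e)
    \<and> (\<forall>k. (\<exists>J. finite J \<and> card J = k \<and> independent V (power_edges V E D) J)
          \<longrightarrow> (\<exists>J'. finite J' \<and> card J' = k - 1 \<and>
                   independent V (power_edges V (insert {s, t} E) D) J'))"
proof (intro conjI allI impI)
  show "\<exists>v\<in>I. \<forall>e\<in>{e \<in> power_edges V (insert {s, t} E) D. e \<subseteq> I}. v \<in> e"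
    using power_edges_insert_star[OF assms(5,4)] .
next
  fix k
  assume "\<exists>J. finite J \<and> card J = k \<and> independent V (power_edges V E D) J"
  then obtain J where J: "finite J" "card J = k" "independent V (power_edges V E D) J" by blast
  show "\<exists>J'. finite J' \<and> card J' = k - 1 \<and> independent V (power_edges V (insert {s, t} E) D) J'"
  proof (cases "J = {}")
    case True
    then show ?thesis using J by (intro exI[of _ "{}"]) (auto simp: independent_def)
  next
    case False
    then obtain c where "c \<in> J"
      and cover: "\<forall>e\<in>{e \<in> power_edges V (insert {s, t} E) D. e \<subseteq> J}. c \<in> e"
      using power_edges_insert_star[OF J(3)] by blast
    have "J \<subseteq> V" using J(3) by (simp add: independent_def)
    then have "independent V (power_edges V (insert {s, t} E) D) (J - {c})"
      using cover by (rule independent_remove_cover)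
    moreover have "card (J - {c}) = k - 1" using J(1,2) \<open>c \<in> J\<close> by simp
    ultimately show ?thesis using J(1) by blast
  qed
qed

end
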